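(* (i) $L(u)Q_1(u)=0$, i.e. writing $L(u)=\sum_{j=0}^N c_j(u)D^j$, one has $\sum_{j=0}^Nc_j(u)Q_1(u+j)=0$ for all $u\in\mathbb C$. (ii) For every $1\le a\le n$, $S_a\cdot L(u)=0$, i.e. $S_a\cdot c_j(u)=0$ in $\mathcal S$ for all $j$ and $u$.
   Context: Fix an integer $n\ge 2$ and put $N=2n+2$. Let $Q_a(u)$ ($1\le a\le n$, $u\in\mathbb C$) be algebraically independent commuting indeterminates, $\mathcal Q=\mathbb Z[Q_a(u)^{\pm1}]_{1\le a\le n,\,u\in\mathbb C}$, and $\mathcal K$ its field of fractions. Put $d_a=1+\delta_{an}$, $Y_a(u)=Q_a(u-\frac{d_a}{2})/Q_a(u+\frac{d_a}{2})$ for $1\le a\le n$, $Y_0(u)=1$, and $\mathcal Y=\mathbb Z[Y_a(u)^{\pm1}]_{1\le a\le n,\,u\in\mathbb C}\subset\mathcal Q$. For $1\le a\le n$ set $z_a(u)=\frac{Y_a(u+\frac a2)}{Y_{a-1}(u+\frac{a+1}2)}$, $z_{\bar a}(u)=\frac{Y_{a-1}(u+\frac{2n-a+3}2)}{Y_a(u+\frac{2n-a+4}2)}$; set $x_a(u)=z_a(u)$, $x_{2n+3-a}(u)=z_{\bar a}(u)$ for $1\le a\le n$, and $x_{n+1}(u)=-x_{n+2}(u)=\frac{Q_n(u+\frac n2)Q_n(u+\frac{n+4}2)}{Q_n(u+\frac{n+2}2)^2}$. $D$ is the shift operator: difference operators are expressions $\sum_j c_j(u)D^j$ with $c_j(u)\in\mathcal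 K$, multiplied using $D\,c(u)=c(u+1)\,D$. Define $L(u)=(x_1(u+n)-D)(x_2(u+n-1)-D)\cdots(x_N(u+n+1-N)-D)$; its coefficients lie in $\mathcal Y$. Screening operators: let $(\alpha_a|\alpha_a)=d_a$, $(\alpha_a|\alpha_{a+1})=(\alpha_{a+1}|\alpha_a)=-\frac12$ for $1\le a\le n-2$, $(\alpha_{n-1}|\alpha_n)=(\alpha_n|\alpha_{n-1})=-1$, and $(\alpha_a|\alpha_b)=0$ if $|a-b|\ge2$. Let $A_a(u)=\prod_{b=1}^n\frac{Q_b(u-(\alpha_a|\alpha_b))}{Q_b(u+(\alpha_a|\alpha_b))}$. Let $\mathcal S$ be the commutative ring generated over $\mathcal Q$ by symbols $S_a(u)$ ($1\le a\le n$, $u\in\mathbb C$) subject to $S_a(u+d_a)=A_a(u+\frac{d_a}2)S_a(u)$. The screening operator $S_a:\mathcal Y\to\mathcal S$ is the additive map obeying the Leibniz rule and $S_a\cdot Y_b(u)=\delta_{ab}Y_b(u)S_b(u)$ (hence $S_a\cdot Y_b(u)^{-1}=-\delta_{ab}Y_b(u)^{-1}S_b(u)$); on difference operators it acts coefficientwise: $S_a\cdot\sum_jc_j(u)D^j=\sum_j(S_a\cdot c_j(u))D^j$. *)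

theory Defs
  imports Complex_Main "HOL-Library.Poly_Mapping"
begin

text \<open>The ring Q = Z[Q_a(u)^{+-1}] as the group ring over Z of the free abelian group
  on the symbols (a,u): Laurent polynomials in algebraically independent indeterminates.\<close>
type_synonym qring = "((nat \<times> complex) \<Rightarrow>\<^sub>0 int) \<Rightarrow>\<^sub>0 int"

definition Qv :: "nat \<Rightarrow> complex \<Rightarrow> qring" where
  "Qv b u = Poly_Mapping.single (Poly_Mapping.single (b, u) 1) 1"

definition Qinv :: "nat \<Rightarrow> complex \<Rightarrow> qring" where
  "Qinv b u = Poly_Mapping.single (Poly_Mapping.single (b, u) (-1)) 1"

definition dd :: "nat \<Rightarrow> nat \<Rightarrow> complex" where
  "dd n a = (if a = n then 2 else 1)"

definition Yv :: "nat \<Rightarrow> nat \<Rightarrow> complex \<Rightarrow> qring" where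
  "Yv n a u = (if a = 0 then 1 else Qv a (u - dd n a / 2) * Qinv a (u + dd n a / 2))"

definition Yinv :: "nat \<Rightarrow> nat \<Rightarrow> complex \<Rightarrow> qring" where
  "Yinv n a u = (if a = 0 then 1 else Qinv a (u - dd n a / 2) * Qv a (u + dd n a / 2))"

definition zv :: "nat \<Rightarrow> nat \<Rightarrow> complex \<Rightarrow> qring" where
  "zv n a u = Yv n a (u + of_nat a / 2) * Yinv n (a - 1) (u + (of_nat a + 1) / 2)"

definition zbar :: "nat \<Rightarrow> nat \<Rightarrow> complex \<Rightarrow> qring" where
  "zbar n a u = Yv n (a - 1) (u + (2 * of_nat n - of_nat a + 3) / 2)
              * Yinv n a (u + (2 * of_nat n - of_nat a + 4) / 2)"

definition xv :: "nat \<Rightarrow> nat \<Rightarrow> complex \<Rightarrow> qring" where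
  "xv n i u =
    (if 1 \<le> i \<and> i \<le> n then zv n i u
     else if i = n + 1 then Qv n (u + of_nat n / 2) * Qv n (u + (of_nat n + 4) / 2)
                           * Qinv n (u + (of_nat n + 2) / 2) * Qinv n (u + (of_nat n + 2) / 2)
     else if i = n + 2 then - (Qv n (u + of_nat n / 2) * Qv n (u + (of_nat n + 4) / 2)
                           * Qinv n (u + (of_nat n + 2) / 2) * Qinv n (u + (of_nat n + 2) / 2))
     else if n + 3 \<le> i \<and> i \<le> 2 * n + 2 then zbar n (2 * n + 3 - i) u
     else 0)"

text \<open>Difference operators sum_j c_j(u) D^j, represented by their coefficient functions
  j \<mapsto> (u \<mapsto> c_j(u)), with product rule D c(u) = c(u+1) D.\<close>
type_synonym 'a dop = "nat \<Rightarrow> complex \<Rightarrow> 'a"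

definition dop_one :: "'a::comm_ring_1 dop" where
  "dop_one j u = (if j = 0 then 1 else 0)"

definition dop_mult :: "'a::comm_ring_1 dop \<Rightarrow> 'a dop \<Rightarrow> 'a dop" where
  "dop_mult P R j u = (\<Sum>i\<le>j. P i u * R (j - i) (u + of_nat i))"

definition dop_lin :: "(complex \<Rightarrow> 'a::comm_ring_1) \<Rightarrow> 'a dop" where
  "dop_lin f j u = (if j = 0 then f u else if j = 1 then -1 else 0)"

text \<open>L(u) = (x_1(u+n) - D)(x_2(u+n-1) - D) ... (x_N(u+n+1-N) - D); Lc n j u = c_j(u).\<close>
definition Lc :: "nat \<Rightarrow> qring dop" where
  "Lc n = foldr dop_mult
     (map (\<lambda>i. dop_lin (\<lambda>u. xv n i (u + of_nat n + 1 - of_nat i))) [1..<2 * n + 3]) dop_one"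

definition cform :: "nat \<Rightarrow> nat \<Rightarrow> nat \<Rightarrow> complex" where
  "cform n a b =
    (if a = b then dd n a
     else if (a = n - 1 \<and> b = n) \<or> (a = n \<and> b = n - 1) then -1
     else if a + 1 = b \<or> b + 1 = a then -1/2
     else 0)"

definition Av :: "nat \<Rightarrow> nat \<Rightarrow> complex \<Rightarrow> qring" where
  "Av n a u = (\<Prod>b\<in>{1..n}. Qv b (u - cform n a b) * Qinv b (u + cform n a b))"

inductive_set Yring :: "nat \<Rightarrow> qring set" for n :: nat where
  Y_gen: "1 \<le> b \<Longrightarrow> b \<le> n \<Longrightarrow> Yv n b u \<in> Yring n"
| Yinv_gen: "1 \<le> b \<Longrightarrow> b \<le> n \<Longrightarrow> Yinv n b u \<in> Yring n"
| one: "1 \<in> Yring n"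
| add: "x \<in> Yring n \<Longrightarrow> y \<in> Yring n \<Longrightarrow> x + y \<in> Yring n"
| neg: "x \<in> Yring n \<Longrightarrow> - x \<in> Yring n"
| mult: "x \<in> Yring n \<Longrightarrow> y \<in> Yring n \<Longrightarrow> x * y \<in> Yring n"

definition is_ring_hom :: "('a::comm_ring_1 \<Rightarrow> 'b::comm_ring_1) \<Rightarrow> bool" where
  "is_ring_hom \<phi> \<longleftrightarrow> \<phi> 1 = 1 \<and> (\<forall>x y. \<phi> (x + y) = \<phi> x + \<phi> y) \<and> (\<forall>x y. \<phi> (x * y) = \<phi> x * \<phi> y)"

text \<open>Images sigma(u) of the symbols S_a(u) in a Q-algebra (via phi) satisfying the defining
  relations S_a(u + d_a) = A_a(u + d_a/2) S_a(u).\<close>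
definition screening_symbols :: "nat \<Rightarrow> nat \<Rightarrow> (qring \<Rightarrow> 'r::comm_ring_1) \<Rightarrow> (complex \<Rightarrow> 'r) \<Rightarrow> bool" where
  "screening_symbols n a \<phi> \<sigma> \<longleftrightarrow> (\<forall>u. \<sigma> (u + dd n a) = \<phi> (Av n a (u + dd n a / 2)) * \<sigma> u)"

text \<open>Der is (on Y) the screening operator S_a composed with the map into the target:
  additive, Leibniz, and S_a . Y_b(u) = delta_ab Y_b(u) S_b(u).\<close>
definition screening_der :: "nat \<Rightarrow> nat \<Rightarrow> (qring \<Rightarrow> 'r::comm_ring_1) \<Rightarrow> (complex \<Rightarrow> 'r) \<Rightarrow> (qring \<Rightarrow> 'r) \<Rightarrow> bool" where
  "screening_der n a \<phi> \<sigma> Der \<longleftrightarrow>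
     (\<forall>x\<in>Yring n. \<forall>y\<in>Yring n. Der (x + y) = Der x + Der y) \<and>
     (\<forall>x\<in>Yring n. \<forall>y\<in>Yring n. Der (x * y) = \<phi> x * Der y + \<phi> y * Der x) \<and>
     (\<forall>b u. 1 \<le> b \<and> b \<le> n \<longrightarrow> Der (Yv n b u) = (if b = a then \<phi> (Yv n b u) * \<sigma> u else 0))"

end

theory Submission
  imports Defs
begin

(* Part (i): the last factor x_N(u+n+1-N) - D of L(u) already annihilates Q_1, since
   x_N(u-n-1) = Q_1(u+1)/Q_1(u).

   Part (ii): S_a acts on Y as a derivation twisted by the embedding of Y, so the elements
   it kills form a subring, and it suffices to cut the product L(u) into blocks whose
   coefficients S_a kills.  A factor not containing Y_a is such a block, and so is the product
   D^2 - Y_n(..)/Y_n(..) of the two middle factors (which are not in Y individually) when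
   a < n.  The factors that
   contain Y_a come in adjacent pairs (z_a, z_(a+1)) and (z_(a+1)bar, z_abar): in the product
   of such a pair Y_a cancels from the constant term, and in the D-coefficient the two
   contributions cancel because z_a(u) = z_(a+1)(u) A_a(..) (resp. its barred analogue)
   matches S_a(u+1) = A_a(..) S_a(u).  For a = n the factors containing Y_n are the four middle
   ones x_n, ..., x_(n+3); they form a single block, handled in the same way with
   S_n(u+2) = A_n(..) S_n(u). *)

section \<open>Difference operators\<close>

lemma dop_mult_one_right [simp]: "dop_mult P dop_one = P"
proof (intro ext)
  fix j u
  have "dop_mult P dop_one j u = (\<Sum>i\<le>j. if i = j then P i u else 0)"
    unfolding dop_mult_def dop_one_def by (intro sum.cong) auto
  then show "dop_mult P dop_one j u = P j u" by simp
qed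

lemma dop_mult_one_left [simp]: "dop_mult dop_one P = P"
proof (intro ext)
  fix j u
  have "dop_mult dop_one P j u = (\<Sum>i\<le>j. if i = 0 then P j u else 0)"
    unfolding dop_mult_def dop_one_def by (intro sum.cong) auto
  then show "dop_mult dop_one P j u = P j u" by simp
qed

lemma dop_mult_assoc: "dop_mult (dop_mult P R) S = dop_mult P (dop_mult R S)"
proof (intro ext)
  fix j u
  define g where "g i k = P i u * R k (u + of_nat i) * S (j - i - k) (u + of_nat i + of_nat k)" for i k
  have "dop_mult P (dop_mult R S) j u = (\<Sum>i\<le>j. \<Sum>k\<le>j - i. g i k)"
    unfolding dop_mult_def g_def by (simp add: sum_distrib_left mult.assoc)
  also have "\<dots> = (\<Sum>(i,k)\<in>{(i,k). i + k \<le> j}. g i k)"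
  proof -
    have "{(i,k). i + k \<le> j} = Sigma {..j} (\<lambda>i. {..j - i})" by auto
    then show ?thesis by (simp add: sum.Sigma)
  qed
  also have "\<dots> = (\<Sum>m\<le>j. \<Sum>i\<le>m. g i (m - i))"
    by (rule sum.triangle_reindex_eq)
  also have "\<dots> = dop_mult (dop_mult P R) S j u"
    unfolding dop_mult_def g_def sum_distrib_right
    by (intro sum.cong refl) (auto simp: of_nat_diff mult.assoc)
  finally show "dop_mult (dop_mult P R) S j u = dop_mult P (dop_mult R S) j u" by simp
qed

lemma foldr_dop_mult_append:
  "foldr dop_mult (xs @ ys) dop_one = dop_mult (foldr dop_mult xs dop_one) (foldr dop_mult ys dop_one)"
  by (induction xs) (simp_all add: dop_mult_assoc)

lemma dop_lin_mult:
  "dop_mult (dop_lin f) P j u = f u * P j u - (if j = 0 then 0 else P (j - 1) (u + 1))"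
proof -
  have "dop_mult (dop_lin f) P j u =
      (\<Sum>i\<le>j. (if i = 0 then f u * P j u else 0) - (if i = 1 then P (j - 1) (u + 1) else 0))"
    unfolding dop_mult_def dop_lin_def by (intro sum.cong) auto
  then show ?thesis by (simp add: sum_subtractf)
qed

lemma dop_mult_lin:
  "dop_mult P (dop_lin g) j u = P j u * g (u + of_nat j) - (if j = 0 then 0 else P (j - 1) u)"
proof -
  have "dop_mult P (dop_lin g) j u =
      (\<Sum>i\<le>j. (if i = j then P j u * g (u + of_nat j) else 0) - (if Suc i = j then P i u else 0))"
    unfolding dop_mult_def dop_lin_def by (intro sum.cong) auto
  then show ?thesis by (cases j) (simp_all add: sum_subtractf)
qed

lemma dop_lin_mult_lin:
  "dop_mult (dop_lin f) (dop_lin g) j u =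
    (if j = 0 then f u * g u else if j = 1 then - f u - g (u + 1) else if j = 2 then 1 else 0)"
  by (cases "j \<le> 2") (auto simp: dop_lin_mult dop_lin_def numeral_2_eq_2 le_Suc_eq)

definition dop_D2_minus :: "(complex \<Rightarrow> 'a::comm_ring_1) \<Rightarrow> 'a dop" where
  "dop_D2_minus m j u = (if j = 0 then - m u else if j = 2 then 1 else 0)"

lemma dop_D2_minus_mult:
  "dop_mult (dop_D2_minus m) P j u = (if 2 \<le> j then P (j - 2) (u + 2) else 0) - m u * P j u"
proof -
  have "dop_mult (dop_D2_minus m) P j u =
      (\<Sum>i\<le>j. (if i = 2 then P (j - 2) (u + 2) else 0) - (if i = 0 then m u * P j u else 0))"
    unfolding dop_mult_def dop_D2_minus_def by (intro sum.cong) auto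
  then show ?thesis by (simp add: sum_subtractf)
qed

lemma dop_lin_mult_D2_minus_mult_lin:
  "dop_mult (dop_lin p) (dop_mult (dop_D2_minus m) (dop_lin q)) j u =
   (if j = 0 then - (p u * m u * q u)
    else if j = 1 then p u * m u + m (u + 1) * q (u + 1)
    else if j = 2 then p u * q (u + 2) - m (u + 1)
    else if j = 3 then - p u - q (u + 3)
    else if j = 4 then 1 else 0)"
proof -
  consider "j = 0" | "j = 1" | "j = 2" | "j = 3" | "j = 4" | "j \<ge> 5" by arith
  then show ?thesis
    by cases (simp_all add: dop_lin_mult dop_D2_minus_mult dop_lin_def algebra_simps)
qed

lemma foldr_dop_lin_vanishes_above_length:
  "length fs < j \<Longrightarrow> foldr dop_mult (map dop_lin fs) dop_one j u = 0"
  by (induction fs arbitrary: j u) (simp_all add: dop_one_def dop_lin_mult)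

lemma dop_mult_lin_annihilates:
  fixes q :: "complex \<Rightarrow> 'a::comm_ring_1"
  assumes step: "\<And>v. g v * q v = q (v + 1)" and deg: "\<And>j. m < j \<Longrightarrow> M j u = 0"
  shows "(\<Sum>j\<le>Suc m. dop_mult M (dop_lin g) j u * q (u + of_nat j)) = 0"
proof -
  define T where "T j = M j u * q (u + of_nat j + 1)" for j
  have "dop_mult M (dop_lin g) j u * q (u + of_nat j) = T j - (if j = 0 then 0 else T (j - 1))" for j
  proof (cases j)
    case (Suc k)
    then have "u + of_nat k + 1 = u + of_nat j" by simp
    then have "dop_mult M (dop_lin g) j u * q (u + of_nat j)
        = M j u * (g (u + of_nat j) * q (u + of_nat j)) - M k u * q (u + of_nat k + 1)"
      using Suc by (simp add: dop_mult_lin algebra_simps)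
    with Suc show ?thesis by (simp only: step T_def) simp
  qed (simp add: dop_mult_lin T_def step mult.assoc)
  moreover have "(\<Sum>j\<le>k. T j - (if j = 0 then 0 else T (j - 1))) = T k" for k
    by (induction k) simp_all
  ultimately have "(\<Sum>j\<le>Suc m. dop_mult M (dop_lin g) j u * q (u + of_nat j)) = T (Suc m)"
    by simp
  also have "\<dots> = 0" by (simp add: T_def deg)
  finally show ?thesis .
qed

definition dop_coeffs_in :: "'a set \<Rightarrow> 'a dop \<Rightarrow> bool" where
  "dop_coeffs_in K P \<longleftrightarrow> (\<forall>j u. P j u \<in> K)"

lemma dop_coeffs_in_foldr_mult:
  assumes "0 \<in> K" "1 \<in> K"
    and "\<And>x y. x \<in> K \<Longrightarrow> y \<in> K \<Longrightarrow> x + y \<in> K" "\<And>x y. x \<in> K \<Longrightarrow> y \<in> K \<Longrightarrow> x * y \<in> K"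
    and "\<forall>P \<in> set Ps. dop_coeffs_in K P"
  shows "dop_coeffs_in K (foldr dop_mult Ps dop_one)"
  using assms(5)
proof (induction Ps)
  case Nil
  then show ?case using assms(1,2) by (simp add: dop_coeffs_in_def dop_one_def)
next
  case (Cons P Ps)
  have sum_mem: "finite A \<Longrightarrow> (\<And>i. i \<in> A \<Longrightarrow> f i \<in> K) \<Longrightarrow> sum f A \<in> K" for f and A :: "nat set"
    by (induction A rule: finite_induct) (simp_all add: assms(1,3))
  from Cons show ?case
    unfolding dop_coeffs_in_def by (auto simp: dop_mult_def intro!: sum_mem assms(4))
qed

lemma foldr_dop_mult_concat:
  "foldr dop_mult (concat Pss) dop_one = foldr dop_mult (map (\<lambda>Ps. foldr dop_mult Ps dop_one) Pss) dop_one"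
  by (induction Pss) (simp_all add: foldr_dop_mult_append del: foldr_append)

lemma upt_append_upt: "i \<le> j \<Longrightarrow> j \<le> k \<Longrightarrow> [i..<j] @ [j..<k] = [i..<k]"
  by (metis le_add_diff_inverse upt_add_eq_append)

lemma foldr_dop_mult_upt_two:
  "j = i + 2 \<Longrightarrow> foldr dop_mult (map F [i..<j]) dop_one = dop_mult (F i) (F (i + 1))"
  by (simp add: numeral_2_eq_2)

section \<open>Laurent monomials and the relations between z, Y and A\<close>

definition qmono :: "(nat \<times> complex \<Rightarrow>\<^sub>0 int) \<Rightarrow> qring" where
  "qmono M = Poly_Mapping.single M 1"

lemma qmono_mult: "qmono M * qmono M' = qmono (M + M')"
  unfolding qmono_def by (simp add: mult_single)

lemma qmono_mult_left: "qmono M * (qmono M' * r) = qmono (M + M') * r"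
  by (simp add: qmono_mult mult.assoc[symmetric])

lemma qmono_zero: "qmono 0 = 1"
  unfolding qmono_def by (simp add: one_poly_mapping.abs_eq)

lemma qmono_eq_iff: "qmono M = qmono M' \<longleftrightarrow> M = M'"
  unfolding qmono_def by (metis lookup_single_eq lookup_single_not_eq zero_neq_one)

lemma Qv_eq_qmono: "Qv b x = qmono (Poly_Mapping.single (b, x) 1)"
  unfolding qmono_def Qv_def ..

lemma Qinv_eq_qmono: "Qinv b x = qmono (- Poly_Mapping.single (b, x) 1)"
  unfolding qmono_def Qinv_def by (simp add: single_uminus)

(* Every product of Q's and their inverses is a monomial qmono M, and qmono_eq_iff reduces an
   identity between such products to one between exponent vectors, which add_ac decides once
   the complex arguments are in a common normal form. *)
lemmas qmono_normalize =
  Qv_eq_qmono Qinv_eq_qmono qmono_mult qmono_mult_left qmono_eq_iff qmono_zero[symmetric] mult.assoc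

lemma Yv_mult_Yinv: "Yv n b x * Yinv n b x = 1"
  by (simp add: Yv_def Yinv_def qmono_normalize)

lemma Av_eq_neighbours:
  assumes "1 \<le> a" "a \<le> n"
  shows "Av n a x = Qv a (x - dd n a) * Qinv a (x + dd n a) *
     (if 2 \<le> a then Qv (a - 1) (x - cform n a (a - 1)) * Qinv (a - 1) (x + cform n a (a - 1)) else 1) *
     (if a < n then Qv (a + 1) (x - cform n a (a + 1)) * Qinv (a + 1) (x + cform n a (a + 1)) else 1)"
proof -
  define h where "h b = Qv b (x - cform n a b) * Qinv b (x + cform n a b)" for b
  have far: "h b = 1" if "b \<noteq> a" "b \<noteq> a - 1" "b \<noteq> a + 1" for b
  proof -
    have "cform n a b = 0" using that assms by (auto simp: cform_def)
    then show ?thesis by (simp add: h_def qmono_normalize)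
  qed
  have "Av n a x = (\<Prod>b\<in>{1..n}. h b)" unfolding Av_def h_def ..
  also have "\<dots> = (\<Prod>b\<in>{1..n} \<inter> {a - 1, a, a + 1}. h b)"
    using far by (intro prod.mono_neutral_right) auto
  also have "\<dots> = h a * (if 2 \<le> a then h (a - 1) else 1) * (if a < n then h (a + 1) else 1)"
  proof -
    have "{1..n} \<inter> {a - 1, a, a + 1} = {a} \<union> (if 2 \<le> a then {a - 1} else {}) \<union> (if a < n then {a + 1} else {})"
      using assms by auto
    then show ?thesis using assms by (simp add: prod.union_disjoint)
  qed
  finally show ?thesis using assms by (simp add: h_def cform_def)
qed

lemma zv_eq_Y_ratio:
  "c = b - 1 \<Longrightarrow> x = v + of_nat b / 2 \<Longrightarrow> y = v + (of_nat b + 1) / 2 \<Longrightarrow>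
   zv n b v = Yv n b x * Yinv n c y"
  by (simp add: zv_def)

lemma zbar_eq_Y_ratio:
  "c = b - 1 \<Longrightarrow> x = v + (2 * of_nat n - of_nat b + 3) / 2 \<Longrightarrow>
   y = v + (2 * of_nat n - of_nat b + 4) / 2 \<Longrightarrow> zbar n b v = Yv n c x * Yinv n b y"
  by (simp add: zbar_def)

lemma zv_eq_zv_Suc_mult_Av:
  assumes "1 \<le> a" "a < n"
  shows "zv n a v = zv n (a + 1) v * Av n a (v + (of_nat a + 1) / 2)"
proof -
  define X where "X = v + of_nat a / 2"
  have "zv n a v = Yv n a X * Yinv n (a - 1) (X + 1/2)"
    by (rule zv_eq_Y_ratio) (simp_all add: X_def field_simps)
  moreover have "zv n (a + 1) v = Yv n (a + 1) (X + 1/2) * Yinv n a (X + 1)"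
    by (rule zv_eq_Y_ratio) (simp_all add: X_def field_simps)
  moreover have "v + (of_nat a + 1) / 2 = X + 1/2"
    by (simp add: X_def field_simps)
  moreover have "dd n a = 1" "dd n (a - 1) = 1" "dd n (a + 1) = (if a + 1 = n then 2 else 1)"
    "2 \<le> a \<Longrightarrow> cform n a (a - 1) = -1/2" "cform n a (a + 1) = (if a + 1 = n then -1 else -1/2)"
    using assms by (auto simp: dd_def cform_def)
  moreover consider "a = 1" | "2 \<le> a" using assms by linarith
  ultimately show ?thesis
    using assms
    by (cases; cases "a + 1 = n")
      (simp_all add: Av_eq_neighbours Yv_def Yinv_def qmono_normalize add_ac)
qed

lemma zbar_Suc_eq_zbar_mult_Av:
  assumes "1 \<le> a" "a < n"
  shows "zbar n (a + 1) v = zbar n a v * Av n a (v + (2 * of_nat n - of_nat a + 3) / 2)"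
proof -
  define W where "W = v + (2 * of_nat n - of_nat a + 2) / 2"
  have "zbar n (a + 1) v = Yv n a W * Yinv n (a + 1) (W + 1/2)"
    by (rule zbar_eq_Y_ratio) (simp_all add: W_def field_simps)
  moreover have "zbar n a v = Yv n (a - 1) (W + 1/2) * Yinv n a (W + 1)"
    by (rule zbar_eq_Y_ratio) (simp_all add: W_def field_simps)
  moreover have "v + (2 * of_nat n - of_nat a + 3) / 2 = W + 1/2"
    by (simp add: W_def field_simps)
  moreover have "dd n a = 1" "dd n (a - 1) = 1" "dd n (a + 1) = (if a + 1 = n then 2 else 1)"
    "2 \<le> a \<Longrightarrow> cform n a (a - 1) = -1/2" "cform n a (a + 1) = (if a + 1 = n then -1 else -1/2)"
    using assms by (auto simp: dd_def cform_def)
  moreover consider "a = 1" | "2 \<le> a" using assms by linarith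
  ultimately show ?thesis
    using assms
    by (cases; cases "a + 1 = n")
      (simp_all add: Av_eq_neighbours Yv_def Yinv_def qmono_normalize add_ac)
qed

definition mid_ratio :: "nat \<Rightarrow> complex \<Rightarrow> qring" where
  "mid_ratio n u = Yv n n (u + of_nat n / 2) * Yinv n n (u + of_nat n / 2 + 1)"

lemma xv_mid_product:
  assumes "1 \<le> n"
  shows "xv n (n + 1) u * xv n (n + 2) (u - 1) = - mid_ratio n u"
proof -
  define w where "w = u + of_nat n / 2"
  have "xv n (n + 1) u = Qv n w * Qv n (w + 2) * Qinv n (w + 1) * Qinv n (w + 1)"
    by (simp add: xv_def w_def field_simps)
  moreover have "xv n (n + 2) (u - 1) = - (Qv n (w - 1) * Qv n (w + 1) * Qinv n w * Qinv n w)"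
    by (simp add: xv_def w_def field_simps)
  moreover have "mid_ratio n u = Yv n n w * Yinv n n (w + 1)"
    by (simp add: mid_ratio_def w_def)
  ultimately show ?thesis
    using assms by (simp add: Yv_def Yinv_def dd_def qmono_normalize add_ac)
qed

lemma zv_zbar_mid_ratio_relations:
  assumes "2 \<le> n"
  shows "zv n n (u + 1) * mid_ratio n u = mid_ratio n (u + 1) * zbar n n (u - 1) * Av n n (u + of_nat n / 2 + 1)"
    and "zv n n (u + 1) = zbar n n (u + 1) * Av n n (u + of_nat n / 2 + 2)"
    and "zv n n (u + 1) * zbar n n u = mid_ratio n (u + 1)"
proof -
  define w where "w = u + of_nat n / 2"
  have z: "zv n n (u + 1) = Yv n n (w + 1) * Yinv n (n - 1) (w + 3/2)"
    by (rule zv_eq_Y_ratio) (simp_all add: w_def field_simps)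
  have zbar: "zbar n n (u + of_nat k - 1) = Yv n (n - 1) (w + of_nat k + 1/2) * Yinv n n (w + of_nat k + 1)"
    for k :: nat
    by (rule zbar_eq_Y_ratio) (simp_all add: w_def field_simps)
  have m: "mid_ratio n (u + of_nat k) = Yv n n (w + of_nat k) * Yinv n n (w + of_nat k + 1)" for k :: nat
    by (simp add: mid_ratio_def w_def add_ac)
  have c: "dd n n = 2" "dd n (n - 1) = 1" "cform n n (n - 1) = -1" "n - 1 \<noteq> 0"
    using assms by (auto simp: dd_def cform_def)
  show "zv n n (u + 1) * mid_ratio n u = mid_ratio n (u + 1) * zbar n n (u - 1) * Av n n (u + of_nat n / 2 + 1)"
    using z zbar[of 0] m[of 0] m[of 1] c assms
    by (simp add: w_def[symmetric] Av_eq_neighbours Yv_def Yinv_def qmono_normalize add_ac)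
  show "zv n n (u + 1) = zbar n n (u + 1) * Av n n (u + of_nat n / 2 + 2)"
    using z zbar[of 2] c assms
    by (simp add: w_def[symmetric] Av_eq_neighbours Yv_def Yinv_def qmono_normalize add_ac)
  show "zv n n (u + 1) * zbar n n u = mid_ratio n (u + 1)"
    using z zbar[of 1] m[of 1] c assms
    by (simp add: w_def[symmetric] Yv_def Yinv_def qmono_normalize add_ac)
qed

lemma zbar_one_mult_Qv:
  assumes "2 \<le> n"
  shows "zbar n 1 (v - of_nat n - 1) * Qv 1 v = Qv 1 (v + 1)"
proof -
  have "zbar n 1 (v - of_nat n - 1) = Yv n 0 v * Yinv n 1 (v + 1/2)"
    by (rule zbar_eq_Y_ratio) (simp_all add: field_simps)
  then show ?thesis using assms by (simp add: Yv_def Yinv_def dd_def qmono_normalize add_ac)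
qed

section \<open>Twisted derivations\<close>

locale twisted_derivation =
  fixes R :: "'a::comm_ring_1 set" and \<phi> :: "'a \<Rightarrow> 'b::comm_ring_1" and D :: "'a \<Rightarrow> 'b"
  assumes one_mem: "1 \<in> R"
    and add_mem: "x \<in> R \<Longrightarrow> y \<in> R \<Longrightarrow> x + y \<in> R"
    and uminus_mem: "x \<in> R \<Longrightarrow> - x \<in> R"
    and mult_mem: "x \<in> R \<Longrightarrow> y \<in> R \<Longrightarrow> x * y \<in> R"
    and hom: "is_ring_hom \<phi>"
    and D_add: "x \<in> R \<Longrightarrow> y \<in> R \<Longrightarrow> D (x + y) = D x + D y"
    and D_mult: "x \<in> R \<Longrightarrow> y \<in> R \<Longrightarrow> D (x * y) = \<phi> x * D y + \<phi> y * D x"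
begin

lemma zero_mem: "0 \<in> R"
  using add_mem[OF one_mem uminus_mem[OF one_mem]] by simp

lemma diff_mem: "x \<in> R \<Longrightarrow> y \<in> R \<Longrightarrow> x - y \<in> R"
  using add_mem[OF _ uminus_mem, of x y] by simp

lemma phi_one: "\<phi> 1 = 1" and phi_mult: "\<phi> (x * y) = \<phi> x * \<phi> y"
  using hom unfolding is_ring_hom_def by auto

lemma D_one: "D 1 = 0"
  using D_mult[OF one_mem one_mem] by (simp add: phi_one)

lemma D_zero: "D 0 = 0"
  using D_add[OF zero_mem zero_mem] by simp

lemma D_uminus: "x \<in> R \<Longrightarrow> D (- x) = - D x"
  using D_add[OF _ uminus_mem, of x x] by (simp add: D_zero eq_neg_iff_add_eq_0 add.commute)

lemma D_diff: "x \<in> R \<Longrightarrow> y \<in> R \<Longrightarrow> D (x - y) = D x - D y"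
  using D_add[OF _ uminus_mem, of x y] D_uminus[of y] by simp

lemma D_inverse:
  assumes "x \<in> R" "y \<in> R" "x * y = 1"
  shows "D y = - (\<phi> y * \<phi> y * D x)"
proof -
  have unit: "\<phi> y * \<phi> x = 1"
    using assms(3) by (metis phi_one phi_mult mult.commute)
  have "\<phi> x * D y + \<phi> y * D x = 0"
    using D_mult[OF assms(1,2)] assms(3) by (simp add: D_one)
  then have "\<phi> x * D y = - (\<phi> y * D x)" by (simp add: eq_neg_iff_add_eq_0)
  then have "\<phi> y * \<phi> x * D y = - (\<phi> y * \<phi> y * D x)" by (simp add: mult.assoc)
  then show ?thesis using unit by simp
qed

definition constants :: "'a set" where
  "constants = {x \<in> R. D x = 0}"

lemma constants_foldr_dop_mult:
  "\<forall>P \<in> set Ps. dop_coeffs_in constants P \<Longrightarrow> dop_coeffs_in constants (foldr dop_mult Ps dop_one)"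
  by (rule dop_coeffs_in_foldr_mult)
    (auto simp: constants_def zero_mem one_mem D_zero D_one D_add D_mult add_mem mult_mem)

lemma constants_foldr_concat:
  "\<forall>Ps \<in> set Pss. dop_coeffs_in constants (foldr dop_mult Ps dop_one) \<Longrightarrow>
   dop_coeffs_in constants (foldr dop_mult (concat Pss) dop_one)"
  unfolding foldr_dop_mult_concat by (rule constants_foldr_dop_mult) simp

lemma dop_lin_constants:
  "(\<And>u. f u \<in> constants) \<Longrightarrow> dop_coeffs_in constants (dop_lin f)"
  by (auto simp: dop_coeffs_in_def dop_lin_def constants_def zero_mem one_mem uminus_mem
      D_zero D_one D_uminus)

lemma dop_D2_minus_constants:
  "(\<And>u. m u \<in> constants) \<Longrightarrow> dop_coeffs_in constants (dop_D2_minus m)"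
  by (auto simp: dop_coeffs_in_def dop_D2_minus_def constants_def zero_mem one_mem uminus_mem
      D_zero D_one D_uminus)

(* The abstract shape of the pairs (z_a, z_(a+1)) and (z_(a+1)bar, z_abar) in L: s(u) is the
   screening symbol at the argument where Y_a occurs in f(u) and in g(u). *)
lemma dop_lin_mult_lin_constants:
  assumes mem: "\<And>u. f u \<in> R" "\<And>u. g u \<in> R"
    and Df: "\<And>u. D (f u) = \<phi> (f u) * s u"
    and Dg: "\<And>u. D (g u) = - (\<phi> (g u) * s u)"
    and s_step: "\<And>u. s (u + 1) = \<phi> (h u) * s u"
    and fgh: "\<And>u. f u = g (u + 1) * h u"
  shows "dop_coeffs_in constants (dop_mult (dop_lin f) (dop_lin g))"
proof -
  have "f u * g u \<in> constants" for u
    using mem by (simp add: constants_def mult_mem D_mult Df Dg algebra_simps)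
  moreover have "- f u - g (u + 1) \<in> constants" for u
  proof -
    have "\<phi> (f u) * s u = \<phi> (g (u + 1)) * s (u + 1)"
      by (simp add: s_step fgh phi_mult mult.assoc)
    then show ?thesis
      using mem by (simp add: constants_def diff_mem uminus_mem D_diff D_uminus Df Dg)
  qed
  ultimately show ?thesis
    by (auto simp: dop_coeffs_in_def dop_lin_mult_lin constants_def zero_mem one_mem D_zero D_one)
qed

lemma dop_lin_mult_D2_minus_mult_lin_constants:
  assumes mem: "\<And>u. p u \<in> R" "\<And>u. m u \<in> R" "\<And>u. q u \<in> R"
    and Dp: "\<And>u. D (p u) = \<phi> (p u) * s (u + 1)"
    and Dm: "\<And>u. D (m u) = \<phi> (m u) * (s u - s (u + 1))"
    and Dq: "\<And>u. D (q u) = - (\<phi> (q u) * s u)"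
    and s_step: "\<And>u. s (u + 2) = \<phi> (h u) * s u"
    and rel: "\<And>u. p u * m u = m (u + 1) * q (u + 1) * h u"
      "\<And>u. p u = q (u + 3) * h (u + 1)"
      "\<And>u. p u * q (u + 2) = m (u + 1)"
  shows "dop_coeffs_in constants (dop_mult (dop_lin p) (dop_mult (dop_D2_minus m) (dop_lin q)))"
proof -
  have Dpm: "D (p u * m u) = \<phi> (p u * m u) * s u" for u
    using mem by (simp add: D_mult Dp Dm phi_mult algebra_simps)
  have "- (p u * m u * q u) \<in> constants" for u
  proof -
    have "D (p u * m u * q u) = \<phi> (p u * m u) * D (q u) + \<phi> (q u) * D (p u * m u)"
      using mem by (simp add: D_mult mult_mem)
    also have "\<dots> = 0" by (simp add: Dq Dpm)
    finally show ?thesis using mem by (simp add: constants_def uminus_mem mult_mem D_uminus)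
  qed
  moreover have "p u * m u + m (u + 1) * q (u + 1) \<in> constants" for u
  proof -
    have "D (m (u + 1) * q (u + 1)) = - (\<phi> (m (u + 1)) * \<phi> (q (u + 1)) * s (u + 1 + 1))"
      using mem by (simp add: D_mult Dm Dq algebra_simps)
    also have "\<dots> = - (\<phi> (p u * m u) * s u)"
      using s_step[of u] by (simp add: rel(1) phi_mult add.assoc mult.assoc)
    finally have "D (m (u + 1) * q (u + 1)) = - (\<phi> (p u * m u) * s u)" .
    then show ?thesis
      using mem by (simp add: constants_def add_mem mult_mem D_add Dpm)
  qed
  moreover have "- p u - q (u + 3) \<in> constants" for u
  proof -
    have "s (u + 3) = \<phi> (h (u + 1)) * s (u + 1)"
      using s_step[of "u + 1"] by (simp add: add.assoc)
    then have "\<phi> (p u) * s (u + 1) = \<phi> (q (u + 3)) * s (u + 3)"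
      by (simp add: rel(2) phi_mult mult.assoc)
    then show ?thesis
      using mem by (simp add: constants_def diff_mem uminus_mem D_diff D_uminus Dp Dq)
  qed
  ultimately show ?thesis
    by (auto simp: dop_coeffs_in_def dop_lin_mult_D2_minus_mult_lin rel(3) constants_def
        zero_mem one_mem D_zero D_one)
qed

end

section \<open>The factorisation of L\<close>

definition Lfactor :: "nat \<Rightarrow> nat \<Rightarrow> qring dop" where
  "Lfactor n i = dop_lin (\<lambda>u. xv n i (u + of_nat n + 1 - of_nat i))"

lemma Lc_eq_foldr_Lfactor: "Lc n = foldr dop_mult (map (Lfactor n) [1..<2 * n + 3]) dop_one"
  unfolding Lc_def Lfactor_def by simp

lemma Lfactor_low:
  "1 \<le> i \<Longrightarrow> i \<le> n \<Longrightarrow> Lfactor n i = dop_lin (\<lambda>u. zv n i (u + of_nat n + 1 - of_nat i))"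
  by (simp add: Lfactor_def xv_def)

lemma Lfactor_high:
  "n + 3 \<le> i \<Longrightarrow> i \<le> 2 * n + 2 \<Longrightarrow>
   Lfactor n i = dop_lin (\<lambda>u. zbar n (2 * n + 3 - i) (u + of_nat n + 1 - of_nat i))"
  by (simp add: Lfactor_def xv_def)

lemma Lfactor_mid_pair:
  assumes "1 \<le> n"
  shows "dop_mult (Lfactor n (n + 1)) (Lfactor n (n + 2)) = dop_D2_minus (mid_ratio n)"
proof (intro ext)
  fix j u
  have "xv n (n + 2) y = - xv n (n + 1) y" for y
    by (simp add: xv_def)
  moreover have "xv n (n + 1) u * xv n (n + 2) (u - 1) = - mid_ratio n u"
    using assms by (rule xv_mid_product)
  ultimately show "dop_mult (Lfactor n (n + 1)) (Lfactor n (n + 2)) j u = dop_D2_minus (mid_ratio n) j u"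
    by (simp add: Lfactor_def dop_lin_mult_lin dop_D2_minus_def algebra_simps)
qed

lemma Lc_annihilates_Q1:
  assumes "2 \<le> n"
  shows "(\<Sum>j\<le>2 * n + 2. Lc n j u * Qv 1 (u + of_nat j)) = 0"
proof -
  define M where "M = foldr dop_mult (map (Lfactor n) [1..<2 * n + 2]) dop_one"
  have "Lfactor n (2 * n + 2) = dop_lin (\<lambda>v. zbar n 1 (v - of_nat n - 1))"
    using assms by (simp add: Lfactor_high algebra_simps)
  moreover have "[1..<2 * n + 3] = [1..<2 * n + 2] @ [2 * n + 2]"
    using upt_Suc_append[of 1 "2 * n + 2"] by (simp add: numeral_3_eq_3 del: upt_Suc)
  ultimately have "Lc n = dop_mult M (dop_lin (\<lambda>v. zbar n 1 (v - of_nat n - 1)))"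
    unfolding Lc_eq_foldr_Lfactor M_def by (simp add: foldr_dop_mult_append del: upt_Suc foldr_append)
  moreover have "M j u = 0" if "2 * n + 1 < j" for j
  proof -
    have "map (Lfactor n) is = map dop_lin (map (\<lambda>i u. xv n i (u + of_nat n + 1 - of_nat i)) is)"
      for "is" by (simp add: Lfactor_def)
    then show ?thesis
      unfolding M_def by (simp only:) (rule foldr_dop_lin_vanishes_above_length, use that in simp)
  qed
  ultimately show ?thesis
    using dop_mult_lin_annihilates[of _ "Qv 1" "2 * n + 1" M u] zbar_one_mult_Qv[OF assms] by simp
qed

section \<open>Screening operators\<close>

locale screening =
  fixes n a :: nat and \<phi> :: "qring \<Rightarrow> 'r::comm_ring_1" and \<sigma> :: "complex \<Rightarrow> 'r"
    and Der :: "qring \<Rightarrow> 'r"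
  assumes hom: "is_ring_hom \<phi>" and symbols: "screening_symbols n a \<phi> \<sigma>"
    and der: "screening_der n a \<phi> \<sigma> Der" and a_pos: "1 \<le> a" and a_le: "a \<le> n"

sublocale screening \<subseteq> twisted_derivation "Yring n" \<phi> Der
  using hom der by unfold_locales (auto simp: screening_der_def intro: Yring.intros)

context screening
begin

lemma Yv_mem: "b \<le> n \<Longrightarrow> Yv n b x \<in> Yring n"
  using Yring.Y_gen[of b n x] by (cases "b = 0") (auto simp: Yv_def one_mem)

lemma Yinv_mem: "b \<le> n \<Longrightarrow> Yinv n b x \<in> Yring n"
  using Yring.Yinv_gen[of b n x] by (cases "b = 0") (auto simp: Yinv_def one_mem)

lemma Der_Yv: "b \<le> n \<Longrightarrow> Der (Yv n b x) = (if b = a then \<phi> (Yv n b x) * \<sigma> x else 0)"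
  using der a_pos by (cases "b = 0") (auto simp: screening_der_def Yv_def D_one)

lemma Der_Yinv: "b \<le> n \<Longrightarrow> Der (Yinv n b x) = (if b = a then - (\<phi> (Yinv n b x) * \<sigma> x) else 0)"
proof -
  assume b: "b \<le> n"
  have unit: "\<phi> (Yinv n c x) * \<phi> (Yv n c x) = 1" for c
    by (metis Yv_mult_Yinv mult.commute phi_mult phi_one)
  have "Der (Yinv n b x) = - (\<phi> (Yinv n b x) * \<phi> (Yinv n b x) * Der (Yv n b x))"
    using b by (intro D_inverse Yv_mem Yinv_mem Yv_mult_Yinv)
  also have "\<dots> = (if b = a then - (\<phi> (Yinv n b x) * (\<phi> (Yinv n b x) * \<phi> (Yv n b x)) * \<sigma> x) else 0)"
    using b by (simp add: Der_Yv mult.assoc)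
  finally show ?thesis using unit by simp
qed

lemma Der_Y_ratio:
  assumes "b \<le> n" "c \<le> n"
  shows "Der (Yv n b x * Yinv n c y) =
    \<phi> (Yv n b x * Yinv n c y) * ((if b = a then \<sigma> x else 0) - (if c = a then \<sigma> y else 0))"
  using assms by (simp add: D_mult Yv_mem Yinv_mem Der_Yv Der_Yinv phi_mult algebra_simps)

lemma sigma_step: "\<sigma> (x + dd n a) = \<phi> (Av n a (x + dd n a / 2)) * \<sigma> x"
  using symbols unfolding screening_symbols_def ..

lemma zv_mem: "b \<le> n \<Longrightarrow> zv n b v \<in> Yring n"
  by (simp add: zv_def Yv_mem Yinv_mem mult_mem)

lemma zbar_mem: "b \<le> n \<Longrightarrow> zbar n b v \<in> Yring n"
  by (simp add: zbar_def Yv_mem Yinv_mem mult_mem)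

lemma mid_ratio_mem: "mid_ratio n u \<in> Yring n"
  by (simp add: mid_ratio_def Yv_mem Yinv_mem mult_mem)

lemma Der_zv:
  assumes "1 \<le> b" "b \<le> n"
  shows "Der (zv n b v) = \<phi> (zv n b v) *
    ((if b = a then \<sigma> (v + of_nat b / 2) else 0) - (if b = a + 1 then \<sigma> (v + (of_nat b + 1) / 2) else 0))"
  using assms unfolding zv_def by (subst Der_Y_ratio) auto

lemma Der_zbar:
  assumes "1 \<le> b" "b \<le> n"
  shows "Der (zbar n b v) = \<phi> (zbar n b v) *
    ((if b = a + 1 then \<sigma> (v + (2 * of_nat n - of_nat b + 3) / 2) else 0)
      - (if b = a then \<sigma> (v + (2 * of_nat n - of_nat b + 4) / 2) else 0))"
  using assms unfolding zbar_def by (subst Der_Y_ratio) auto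

lemma Der_mid_ratio:
  "Der (mid_ratio n u) =
    \<phi> (mid_ratio n u) * (if a = n then \<sigma> (u + of_nat n / 2) - \<sigma> (u + of_nat n / 2 + 1) else 0)"
  unfolding mid_ratio_def by (subst Der_Y_ratio) auto

lemma Lfactor_low_constants:
  assumes "1 \<le> i" "i \<le> n" "i \<noteq> a" "i \<noteq> a + 1"
  shows "dop_coeffs_in constants (Lfactor n i)"
  unfolding Lfactor_low[OF assms(1,2)]
  by (rule dop_lin_constants) (use assms in \<open>simp add: constants_def zv_mem Der_zv\<close>)

lemma Lfactor_high_constants:
  assumes "n + 3 \<le> i" "i \<le> 2 * n + 2" "2 * n + 3 - i \<noteq> a" "2 * n + 3 - i \<noteq> a + 1"
  shows "dop_coeffs_in constants (Lfactor n i)"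
  unfolding Lfactor_high[OF assms(1,2)]
  by (rule dop_lin_constants) (use assms in \<open>simp add: constants_def zbar_mem Der_zbar\<close>)

lemma Lfactor_pair_low_constants:
  assumes "a < n"
  shows "dop_coeffs_in constants (dop_mult (Lfactor n a) (Lfactor n (a + 1)))"
proof -
  define c :: complex where "c = of_nat n + 1 - of_nat a"
  have "dop_coeffs_in constants
      (dop_mult (dop_lin (\<lambda>u. zv n a (u + c))) (dop_lin (\<lambda>u. zv n (a + 1) (u + c - 1))))"
  proof (rule dop_lin_mult_lin_constants[where s = "\<lambda>u. \<sigma> (u + c + of_nat a / 2)"
        and h = "\<lambda>u. Av n a (u + c + (of_nat a + 1) / 2)"])
    fix u
    show "zv n a (u + c) \<in> Yring n" "zv n (a + 1) (u + c - 1) \<in> Yring n"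
      using assms by (simp_all add: zv_mem)
    show "Der (zv n a (u + c)) = \<phi> (zv n a (u + c)) * \<sigma> (u + c + of_nat a / 2)"
      using assms a_pos by (simp add: Der_zv)
    show "Der (zv n (a + 1) (u + c - 1)) = - (\<phi> (zv n (a + 1) (u + c - 1)) * \<sigma> (u + c + of_nat a / 2))"
      using assms a_pos by (simp add: Der_zv algebra_simps add_divide_distrib)
    show "\<sigma> (u + 1 + c + of_nat a / 2) = \<phi> (Av n a (u + c + (of_nat a + 1) / 2)) * \<sigma> (u + c + of_nat a / 2)"
      using assms sigma_step[of "u + c + of_nat a / 2"] by (simp add: dd_def algebra_simps add_divide_distrib)
    show "zv n a (u + c) = zv n (a + 1) (u + 1 + c - 1) * Av n a (u + c + (of_nat a + 1) / 2)"
      using zv_eq_zv_Suc_mult_Av[OF a_pos assms] by (simp add: algebra_simps)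
  qed
  moreover have "Lfactor n a = dop_lin (\<lambda>u. zv n a (u + c))"
    using assms a_pos by (simp add: Lfactor_low c_def algebra_simps)
  moreover have "Lfactor n (a + 1) = dop_lin (\<lambda>u. zv n (a + 1) (u + c - 1))"
    using assms by (simp add: Lfactor_low c_def algebra_simps)
  ultimately show ?thesis by simp
qed

lemma Lfactor_pair_high_constants:
  assumes "a < n"
  shows "dop_coeffs_in constants (dop_mult (Lfactor n (2 * n + 2 - a)) (Lfactor n (2 * n + 3 - a)))"
proof -
  define c :: complex where "c = of_nat a - of_nat n - 1"
  define e :: complex where "e = (2 * of_nat n - of_nat a + 2) / 2"
  have "dop_coeffs_in constants
      (dop_mult (dop_lin (\<lambda>u. zbar n (a + 1) (u + c))) (dop_lin (\<lambda>u. zbar n a (u + c - 1))))"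
  proof (rule dop_lin_mult_lin_constants[where s = "\<lambda>u. \<sigma> (u + c + e)"
        and h = "\<lambda>u. Av n a (u + c + e + 1/2)"])
    fix u
    show "zbar n (a + 1) (u + c) \<in> Yring n" "zbar n a (u + c - 1) \<in> Yring n"
      using assms by (simp_all add: zbar_mem)
    show "Der (zbar n (a + 1) (u + c)) = \<phi> (zbar n (a + 1) (u + c)) * \<sigma> (u + c + e)"
      using assms a_pos by (simp add: Der_zbar e_def algebra_simps add_divide_distrib)
    show "Der (zbar n a (u + c - 1)) = - (\<phi> (zbar n a (u + c - 1)) * \<sigma> (u + c + e))"
      using assms a_pos by (simp add: Der_zbar e_def algebra_simps add_divide_distrib diff_divide_distrib)
    show "\<sigma> (u + 1 + c + e) = \<phi> (Av n a (u + c + e + 1/2)) * \<sigma> (u + c + e)"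
      using assms sigma_step[of "u + c + e"] by (simp add: dd_def algebra_simps)
    show "zbar n (a + 1) (u + c) = zbar n a (u + 1 + c - 1) * Av n a (u + c + e + 1/2)"
      using zbar_Suc_eq_zbar_mult_Av[OF a_pos assms]
      by (simp add: e_def algebra_simps add_divide_distrib diff_divide_distrib)
  qed
  moreover have "Lfactor n (2 * n + 2 - a) = dop_lin (\<lambda>u. zbar n (a + 1) (u + c))"
    using assms a_pos by (simp add: Lfactor_high c_def of_nat_diff algebra_simps)
  moreover have "Lfactor n (2 * n + 3 - a) = dop_lin (\<lambda>u. zbar n a (u + c - 1))"
    using assms a_pos by (simp add: Lfactor_high c_def of_nat_diff algebra_simps)
  ultimately show ?thesis by simp
qed

lemma Lfactor_mid_pair_constants:
  assumes "a < n"
  shows "dop_coeffs_in constants (dop_mult (Lfactor n (n + 1)) (Lfactor n (n + 2)))"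
  unfolding Lfactor_mid_pair[OF order.trans[OF a_pos a_le]]
  by (rule dop_D2_minus_constants)
    (use assms in \<open>simp add: constants_def mid_ratio_mem Der_mid_ratio\<close>)

lemma Lfactor_block_constants:
  assumes "a = n" "2 \<le> n"
  shows "dop_coeffs_in constants (foldr dop_mult (map (Lfactor n) [n..<n + 4]) dop_one)"
proof -
  define w :: complex where "w = of_nat n / 2"
  have "dop_coeffs_in constants (dop_mult (dop_lin (\<lambda>u. zv n n (u + 1)))
      (dop_mult (dop_D2_minus (mid_ratio n)) (dop_lin (\<lambda>u. zbar n n (u - 2)))))"
  proof (rule dop_lin_mult_D2_minus_mult_lin_constants[where s = "\<lambda>u. \<sigma> (u + w)"
        and h = "\<lambda>u. Av n n (u + w + 1)"])
    fix u
    show "zv n n (u + 1) \<in> Yring n" "mid_ratio n u \<in> Yring n" "zbar n n (u - 2) \<in> Yring n"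
      by (simp_all add: zv_mem mid_ratio_mem zbar_mem)
    show "Der (zv n n (u + 1)) = \<phi> (zv n n (u + 1)) * \<sigma> (u + 1 + w)"
      using assms by (simp add: Der_zv w_def algebra_simps)
    show "Der (mid_ratio n u) = \<phi> (mid_ratio n u) * (\<sigma> (u + w) - \<sigma> (u + 1 + w))"
      using assms by (simp add: Der_mid_ratio w_def algebra_simps)
    show "Der (zbar n n (u - 2)) = - (\<phi> (zbar n n (u - 2)) * \<sigma> (u + w))"
      using assms by (simp add: Der_zbar w_def algebra_simps add_divide_distrib)
    show "\<sigma> (u + 2 + w) = \<phi> (Av n n (u + w + 1)) * \<sigma> (u + w)"
      using assms sigma_step[of "u + w"] by (simp add: dd_def algebra_simps)
    show "zv n n (u + 1) * mid_ratio n u = mid_ratio n (u + 1) * zbar n n (u + 1 - 2) * Av n n (u + w + 1)"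
      using zv_zbar_mid_ratio_relations(1)[OF assms(2)] by (simp add: w_def)
    show "zv n n (u + 1) = zbar n n (u + 3 - 2) * Av n n (u + 1 + w + 1)"
      using zv_zbar_mid_ratio_relations(2)[OF assms(2), of u] by (simp add: w_def add_ac)
    show "zv n n (u + 1) * zbar n n (u + 2 - 2) = mid_ratio n (u + 1)"
      using zv_zbar_mid_ratio_relations(3)[OF assms(2)] by simp
  qed
  moreover have "Lfactor n n = dop_lin (\<lambda>u. zv n n (u + 1))"
    using assms by (simp add: Lfactor_low)
  moreover have "Lfactor n (n + 3) = dop_lin (\<lambda>u. zbar n n (u - 2))"
    using assms by (simp add: Lfactor_high algebra_simps)
  moreover have "[n..<n + 4] = [n, n + 1, n + 2, n + 3]"
    by (simp add: numeral_eq_Suc)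
  ultimately show ?thesis
    using Lfactor_mid_pair[of n] assms by (simp add: dop_mult_assoc[symmetric])
qed

lemma foldr_Lfactor_constants:
  "(\<And>i. l \<le> i \<Longrightarrow> i < r \<Longrightarrow> dop_coeffs_in constants (Lfactor n i)) \<Longrightarrow>
   dop_coeffs_in constants (foldr dop_mult (map (Lfactor n) [l..<r]) dop_one)"
  by (rule constants_foldr_dop_mult) auto

lemma Lc_constants_if_less:
  assumes "a < n"
  shows "dop_coeffs_in constants (Lc n)"
proof -
  let ?chunks = "[[1..<a], [a..<a + 2], [a + 2..<n + 1], [n + 1..<n + 3], [n + 3..<2 * n + 2 - a],
      [2 * n + 2 - a..<2 * n + 4 - a], [2 * n + 4 - a..<2 * n + 3]]"
  have split: "[1..<2 * n + 3] = concat ?chunks"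
    using assms a_pos by (simp add: upt_append_upt del: upt_Suc)
  have "2 * n + 4 - a = (2 * n + 2 - a) + 2" "2 * n + 2 - a + 1 = 2 * n + 3 - a"
    using assms by simp_all
  then have pair_high: "dop_coeffs_in constants
      (foldr dop_mult (map (Lfactor n) [2 * n + 2 - a..<2 * n + 4 - a]) dop_one)"
    using Lfactor_pair_high_constants[OF assms] by (simp only: foldr_dop_mult_upt_two)
  have pair_low: "dop_coeffs_in constants (foldr dop_mult (map (Lfactor n) [a..<a + 2]) dop_one)"
    using Lfactor_pair_low_constants[OF assms] by (simp only: foldr_dop_mult_upt_two)
  have pair_mid: "dop_coeffs_in constants (foldr dop_mult (map (Lfactor n) [n + 1..<n + 3]) dop_one)"
    using Lfactor_mid_pair_constants[OF assms] by (simp only: foldr_dop_mult_upt_two) simp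
  have "dop_coeffs_in constants (foldr dop_mult (map (Lfactor n) [1..<a]) dop_one)"
    "dop_coeffs_in constants (foldr dop_mult (map (Lfactor n) [a + 2..<n + 1]) dop_one)"
    by (intro foldr_Lfactor_constants Lfactor_low_constants; use assms in simp)+
  moreover have "dop_coeffs_in constants (foldr dop_mult (map (Lfactor n) [n + 3..<2 * n + 2 - a]) dop_one)"
    "dop_coeffs_in constants (foldr dop_mult (map (Lfactor n) [2 * n + 4 - a..<2 * n + 3]) dop_one)"
    by (intro foldr_Lfactor_constants Lfactor_high_constants; use assms a_pos in simp)+
  ultimately have "\<forall>Ps \<in> set (map (map (Lfactor n)) ?chunks). dop_coeffs_in constants (foldr dop_mult Ps dop_one)"
    using pair_low pair_mid pair_high by (simp del: upt_Suc)
  then show ?thesis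
    unfolding Lc_eq_foldr_Lfactor split map_concat by (rule constants_foldr_concat)
qed

lemma Lc_constants_if_eq:
  assumes "a = n" "2 \<le> n"
  shows "dop_coeffs_in constants (Lc n)"
proof -
  let ?chunks = "[[1..<n], [n..<n + 4], [n + 4..<2 * n + 3]]"
  have split: "[1..<2 * n + 3] = concat ?chunks"
    using assms by (simp add: upt_append_upt del: upt_Suc)
  have "dop_coeffs_in constants (foldr dop_mult (map (Lfactor n) [1..<n]) dop_one)"
    "dop_coeffs_in constants (foldr dop_mult (map (Lfactor n) [n + 4..<2 * n + 3]) dop_one)"
    by (intro foldr_Lfactor_constants Lfactor_low_constants Lfactor_high_constants; use assms in simp)+
  with Lfactor_block_constants[OF assms]
  have "\<forall>Ps \<in> set (map (map (Lfactor n)) ?chunks). dop_coeffs_in constants (foldr dop_mult Ps dop_one)"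
    by (simp del: upt_Suc)
  then show ?thesis
    unfolding Lc_eq_foldr_Lfactor split map_concat by (rule constants_foldr_concat)
qed

lemma Der_Lc:
  assumes "2 \<le> n"
  shows "Der (Lc n j u) = 0"
proof -
  have "dop_coeffs_in constants (Lc n)"
    using Lc_constants_if_less Lc_constants_if_eq a_le assms by (cases "a < n") auto
  then show ?thesis unfolding dop_coeffs_in_def constants_def by blast
qed

end

theorem mainTheorem2:
  fixes n :: nat
  assumes "n \<ge> 2"
  shows "(\<forall>u. (\<Sum>j\<le>2 * n + 2. Lc n j u * Qv 1 (u + of_nat j)) = 0) \<and>
         (\<forall>a. 1 \<le> a \<and> a \<le> n \<longrightarrow>
            (\<forall>(\<phi> :: qring \<Rightarrow> 'r::comm_ring_1) \<sigma> Der.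
               is_ring_hom \<phi> \<and> screening_symbols n a \<phi> \<sigma> \<and> screening_der n a \<phi> \<sigma> Der \<longrightarrow>
               (\<forall>j u. Der (Lc n j u) = 0)))"
proof (intro conjI allI impI)
  fix u
  show "(\<Sum>j\<le>2 * n + 2. Lc n j u * Qv 1 (u + of_nat j)) = 0"
    using assms by (rule Lc_annihilates_Q1)
next
  fix a and \<phi> :: "qring \<Rightarrow> 'r::comm_ring_1" and \<sigma> Der j u
  assume "1 \<le> a \<and> a \<le> n"
    and "is_ring_hom \<phi> \<and> screening_symbols n a \<phi> \<sigma> \<and> screening_der n a \<phi> \<sigma> Der"
  then interpret screening n a \<phi> \<sigma> Der
    by unfold_locales auto
  show "Der (Lc n j u) = 0"
    using assms by (rule Der_Lc)
qed

end
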